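(* Let $r \ge 1$ and $s \le r$. For $1 \le j \le r$ and $d \ge 0$, let $e^d_{r,j}$ be the elementary symmetric polynomial of degree $d$ in the $r-1$ variables $x_1,\dots,x_r$ with $x_j$ omitted. Let $A_r^s(x_1,\dots,x_r)$ be the $s \times r$ matrix whose $(d+1, j)$ entry is $e^d_{r,j}$ for $0 \le d \le s-1$, $1 \le j \le r$. For $1 \le i_1 < i_2 < \cdots < i_s \le r$, let $B_{i_1,\dots,i_s}$ be the $s \times s$ submatrix of $A_r^s$ consisting of columns $i_1,\dots,i_s$. Then, as polynomials in $x_1,\dots,x_r$, \[ \det B_{i_1,\dots,i_s}(x_1,\dots,x_r) = \prod_{1 \le \alpha < \beta \le s} (x_{i_\alpha} - x_{i_\beta}). \] *)

theory Defs
  imports "Jordan_Normal_Form.Determinant"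
begin

definition esym_omit :: "nat \<Rightarrow> nat \<Rightarrow> nat \<Rightarrow> (nat \<Rightarrow> 'a::comm_ring_1) \<Rightarrow> 'a" where
  "esym_omit r j d x = (\<Sum>S\<in>{S. S \<subseteq> {1..r} - {j} \<and> card S = d}. \<Prod>i\<in>S. x i)"

text \<open>The s x r matrix A_r^s: entry in row d+1, column j is e^d_{r,j} (0-based storage).\<close>
definition A_mat :: "nat \<Rightarrow> nat \<Rightarrow> (nat \<Rightarrow> 'a::comm_ring_1) \<Rightarrow> 'a mat" where
  "A_mat r s x = mat s r (\<lambda>(a, b). esym_omit r (b + 1) a x)"

definition B_mat :: "nat \<Rightarrow> nat \<Rightarrow> (nat \<Rightarrow> nat) \<Rightarrow> (nat \<Rightarrow> 'a::comm_ring_1) \<Rightarrow> 'a mat" where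
  "B_mat r s i x = mat s s (\<lambda>(a, b). A_mat r s x $$ (a, i (b + 1) - 1))"

end

theory Submission
  imports Defs
begin

text \<open>Write e^k for the elementary symmetric polynomials in all r variables. Since
  \<Prod>_{k\<noteq>j} (1 + x_k t) = \<Prod>_k (1 + x_k t) / (1 + x_j t), the polynomial e^d_{r,j} equals
  \<Sum>_{m\<le>d} e^{d-m} (-x_j)^m. Hence B is the product of the lower unitriangular matrix
  (e^{d-m})_{d,m} with the Vandermonde matrix of -x_{i_1}, ..., -x_{i_s}, and det B is a
  Vandermonde determinant.\<close>

definition esym :: "'b set \<Rightarrow> nat \<Rightarrow> ('b \<Rightarrow> 'a::comm_ring_1) \<Rightarrow> 'a" where
  "esym U d x = (\<Sum>S\<in>{S. S \<subseteq> U \<and> card S = d}. \<Prod>i\<in>S. x i)"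

lemma subsets_card_0: "finite U \<Longrightarrow> {S. S \<subseteq> U \<and> card S = 0} = {{}}"
  using finite_subset by fastforce

lemma subsets_card_Suc_insert:
  assumes "finite U" "j \<notin> U"
  shows "{S. S \<subseteq> insert j U \<and> card S = Suc d} =
    {S. S \<subseteq> U \<and> card S = Suc d} \<union> insert j ` {S. S \<subseteq> U \<and> card S = d}"
proof (intro equalityI subsetI)
  fix S assume S: "S \<in> {S. S \<subseteq> insert j U \<and> card S = Suc d}"
  then have "finite S" using assms(1) finite_subset by blast
  with S show "S \<in> {S. S \<subseteq> U \<and> card S = Suc d} \<union> insert j ` {S. S \<subseteq> U \<and> card S = d}"
    by (cases "j \<in> S") (auto simp: image_iff intro!: exI[of _ "S - {j}"])
next
  fix S assume "S \<in> {S. S \<subseteq> U \<and> card S = Suc d} \<union> insert j ` {S. S \<subseteq> U \<and> card S = d}"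
  then show "S \<in> {S. S \<subseteq> insert j U \<and> card S = Suc d}"
    using assms finite_subset by (fastforce simp: card_insert_if)
qed

lemma esym_0: "finite U \<Longrightarrow> esym U 0 x = 1"
  unfolding esym_def by (simp add: subsets_card_0)

lemma esym_insert_Suc:
  assumes "finite U" "j \<notin> U"
  shows "esym (insert j U) (Suc d) x = esym U (Suc d) x + x j * esym U d x"
proof -
  have fin: "finite {S. S \<subseteq> U \<and> card S = k}" for k
    using assms(1) by (simp add: finite_Collect_subsets)
  have inj: "inj_on (insert j) {S. S \<subseteq> U \<and> card S = d}"
    using assms(2) by (intro inj_onI) (metis Diff_insert_absorb in_mono mem_Collect_eq)
  have "esym (insert j U) (Suc d) x =
      esym U (Suc d) x + (\<Sum>S\<in>insert j ` {S. S \<subseteq> U \<and> card S = d}. \<Prod>i\<in>S. x i)"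
    unfolding esym_def subsets_card_Suc_insert[OF assms]
    by (rule sum.union_disjoint) (use fin assms(2) in auto)
  also have "(\<Sum>S\<in>insert j ` {S. S \<subseteq> U \<and> card S = d}. \<Prod>i\<in>S. x i) = x j * esym U d x"
    unfolding esym_def sum.reindex[OF inj] sum_distrib_left
    using assms by (intro sum.cong refl) (auto intro!: prod.insert dest: finite_subset)
  finally show ?thesis .
qed

lemma esym_remove:
  assumes "finite U" "j \<in> U"
  shows "esym (U - {j}) d x = (\<Sum>m\<le>d. esym U (d - m) x * (- x j) ^ m)"
proof (induction d)
  case 0
  show ?case using assms(1) by (simp add: esym_0)
next
  case (Suc d)
  have U: "U = insert j (U - {j})" using assms(2) by blast
  have "esym (U - {j}) (Suc d) x = esym U (Suc d) x - x j * esym (U - {j}) d x"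
    using esym_insert_Suc[of "U - {j}" j d x] assms(1) U by simp
  also have "\<dots> = esym U (Suc d) x + (\<Sum>m\<le>d. esym U (d - m) x * (- x j) ^ Suc m)"
    by (simp add: Suc sum_distrib_left algebra_simps sum_negf)
  also have "\<dots> = (\<Sum>m\<le>Suc d. esym U (Suc d - m) x * (- x j) ^ m)"
    by (subst sum.atMost_Suc_shift) simp
  finally show ?case .
qed

lemma index_mult_mat_mat:
  assumes "a < n" "b < k"
  shows "(mat n m f * mat m k g) $$ (a, b) = (\<Sum>c<m. f (a, c) * g (c, b))"
  using assms by (simp add: scalar_prod_def atLeast0LessThan)

lemma det_mat_lower_triangular:
  assumes "\<And>a b. a < b \<Longrightarrow> b < n \<Longrightarrow> f (a, b) = 0"
  shows "det (mat n n f) = (\<Prod>a<n. f (a, a))"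
proof -
  have "det (mat n n f) = prod_list (diag_mat (mat n n f))"
    by (rule det_lower_triangular[of n]) (use assms in auto)
  also have "\<dots> = (\<Prod>a<n. f (a, a))"
    by (simp add: diag_mat_def prod.list_conv_set_nth atLeast0LessThan[symmetric])
  finally show ?thesis .
qed

lemma det_mat_first_col_unit:
  assumes "f (0, 0) = 1" "\<And>a. f (Suc a, 0) = 0"
  shows "det (mat (Suc n) (Suc n) f) = det (mat n n (\<lambda>(a, b). f (Suc a, Suc b)))"
proof -
  let ?M = "mat (Suc n) (Suc n) f"
  have "det ?M = (\<Sum>a<Suc n. ?M $$ (a, 0) * cofactor ?M a 0)"
    by (rule laplace_expansion_column) auto
  also have "\<dots> = cofactor ?M 0 0"
    using assms by (subst sum.lessThan_Suc_shift) simp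
  also have "\<dots> = det (mat n n (\<lambda>(a, b). f (Suc a, Suc b)))"
    unfolding cofactor_def mat_delete_def by (simp, intro arg_cong[where f = det] eq_matI) auto
  finally show ?thesis .
qed

definition vandermonde_mat :: "nat \<Rightarrow> (nat \<Rightarrow> 'a::comm_ring_1) \<Rightarrow> 'a mat" where
  "vandermonde_mat n y = mat n n (\<lambda>(a, b). y b ^ a)"

text \<open>Subtracting \<open>y 0\<close> times row \<open>a\<close> from row \<open>a + 1\<close> clears the first column.\<close>
lemma vandermonde_mat_row_reduction:
  "mat (Suc n) (Suc n) (\<lambda>(a, b). if a = b then 1 else if a = Suc b then - y 0 else 0)
     * vandermonde_mat (Suc n) y
   = mat (Suc n) (Suc n) (\<lambda>(a, b). if a = 0 then 1 else y b ^ (a - 1) * (y b - y 0))"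
  (is "?E * ?V = ?M")
proof (rule eq_matI)
  fix a b assume "a < dim_row ?M" "b < dim_col ?M"
  then have ab: "a < Suc n" "b < Suc n" by auto
  have "(?E * ?V) $$ (a, b) =
      (\<Sum>c<Suc n. (if c = a then y b ^ c else 0) + (if Suc c = a then - y 0 * y b ^ c else 0))"
    unfolding vandermonde_mat_def using ab by (subst index_mult_mat_mat) (auto intro: sum.cong)
  also have "\<dots> = ?M $$ (a, b)"
  proof (cases a)
    case (Suc a')
    then have "(\<Sum>c<Suc n. if Suc c = a then - y 0 * y b ^ c else 0) = - y 0 * y b ^ a'"
      using ab by (simp add: sum.delta')
    then show ?thesis using ab Suc by (simp add: sum.distrib algebra_simps) (metis Suc_lessI power_Suc)
  qed (use ab in \<open>simp add: sum.distrib\<close>)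
  finally show "(?E * ?V) $$ (a, b) = ?M $$ (a, b)" .
qed (auto simp: vandermonde_mat_def)

lemma det_vandermonde_mat_Suc:
  "det (vandermonde_mat (Suc n) y) =
     (\<Prod>b<n. y (Suc b) - y 0) * det (vandermonde_mat n (\<lambda>b. y (Suc b)))"
proof -
  let ?E = "mat (Suc n) (Suc n) (\<lambda>(a, b). if a = b then 1 else if a = Suc b then - y 0 else 0)"
  let ?D = "mat n n (\<lambda>(a, b). if a = b then y (Suc b) - y 0 else 0)"
  have "det (vandermonde_mat (Suc n) y) = det ?E * det (vandermonde_mat (Suc n) y)"
    by (subst det_mat_lower_triangular) auto
  also have "\<dots> = det (mat (Suc n) (Suc n) (\<lambda>(a, b). if a = 0 then 1 else y b ^ (a - 1) * (y b - y 0)))"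
    by (subst vandermonde_mat_row_reduction[symmetric], rule det_mult[symmetric])
      (auto simp: vandermonde_mat_def)
  also have "\<dots> = det (mat n n (\<lambda>(a, b). y (Suc b) ^ a * (y (Suc b) - y 0)))"
    by (subst det_mat_first_col_unit) auto
  also have "mat n n (\<lambda>(a, b). y (Suc b) ^ a * (y (Suc b) - y 0)) =
      vandermonde_mat n (\<lambda>b. y (Suc b)) * ?D"
    unfolding vandermonde_mat_def
    by (rule eq_matI, subst index_mult_mat_mat) (auto simp: if_distrib sum.delta' cong: if_cong)
  also have "det \<dots> = det (vandermonde_mat n (\<lambda>b. y (Suc b))) * det ?D"
    by (rule det_mult) (auto simp: vandermonde_mat_def)
  also have "det ?D = (\<Prod>b<n. y (Suc b) - y 0)"
    by (subst det_mat_lower_triangular) auto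
  finally show ?thesis by (simp add: mult.commute)
qed

lemma det_vandermonde_mat:
  "det (vandermonde_mat n y) = (\<Prod>a<n. \<Prod>b\<in>{Suc a..<n}. y b - y a)"
proof (induction n arbitrary: y)
  case 0
  show ?case by (simp add: vandermonde_mat_def det_dim_zero)
next
  case (Suc n)
  have "(\<Prod>a<Suc n. \<Prod>b\<in>{Suc a..<Suc n}. y b - y a) =
      (\<Prod>b\<in>{Suc 0..<Suc n}. y b - y 0) * (\<Prod>a<n. \<Prod>b\<in>{Suc (Suc a)..<Suc n}. y b - y (Suc a))"
    by (subst prod.lessThan_Suc_shift) simp
  also have "\<dots> = (\<Prod>b<n. y (Suc b) - y 0) * (\<Prod>a<n. \<Prod>b\<in>{Suc a..<n}. y (Suc b) - y (Suc a))"
    by (simp only: prod.shift_bounds_Suc_ivl atLeast0LessThan)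
  finally show ?case by (simp add: det_vandermonde_mat_Suc Suc.IH)
qed

lemma esym_remove_mat_eq:
  assumes "finite U" "\<And>b. b < s \<Longrightarrow> j b \<in> U"
  shows "mat s s (\<lambda>(d, b). esym (U - {j b}) d x) =
    mat s s (\<lambda>(d, m). if m \<le> d then esym U (d - m) x else 0) * vandermonde_mat s (\<lambda>b. - x (j b))"
  (is "?B = ?L * ?V")
proof (rule eq_matI)
  fix d b assume "d < dim_row (?L * ?V)" "b < dim_col (?L * ?V)"
  then have db: "d < s" "b < s" by (auto simp: vandermonde_mat_def)
  have "(?L * ?V) $$ (d, b) = (\<Sum>m\<in>{..<s} \<inter> {..d}. esym U (d - m) x * (- x (j b)) ^ m)"
    unfolding vandermonde_mat_def using db
    by (subst index_mult_mat_mat) (auto simp: sum.inter_restrict if_distrib intro: sum.cong)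
  also have "{..<s} \<inter> {..d} = {..d}" using db by auto
  finally show "?B $$ (d, b) = (?L * ?V) $$ (d, b)"
    using db by (simp add: esym_remove assms)
qed (auto simp: vandermonde_mat_def)

lemma det_esym_remove_mat:
  assumes "finite U" "\<And>b. b < s \<Longrightarrow> j b \<in> U"
  shows "det (mat s s (\<lambda>(d, b). esym (U - {j b}) d x)) =
    (\<Prod>a<s. \<Prod>b\<in>{Suc a..<s}. x (j a) - x (j b))"
proof -
  let ?L = "mat s s (\<lambda>(d, m). if m \<le> d then esym U (d - m) x else 0)"
  have "det ?L = 1"
    using assms(1) by (subst det_mat_lower_triangular) (auto simp: esym_0)
  moreover have "det (?L * vandermonde_mat s (\<lambda>b. - x (j b))) =
      det ?L * det (vandermonde_mat s (\<lambda>b. - x (j b)))"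
    by (rule det_mult) (auto simp: vandermonde_mat_def)
  ultimately show ?thesis
    by (simp add: esym_remove_mat_eq[OF assms] det_vandermonde_mat)
qed

theorem lemma2p2:
  fixes r s :: nat and i :: "nat \<Rightarrow> nat" and x :: "nat \<Rightarrow> 'a::comm_ring_1"
  assumes "r \<ge> 1" and "s \<le> r"
    and "strict_mono_on {1..s} i"
    and "\<forall>\<alpha>\<in>{1..s}. i \<alpha> \<in> {1..r}"
  shows "det (B_mat r s i x) = (\<Prod>\<alpha>\<in>{1..s}. \<Prod>\<beta>\<in>{\<alpha>+1..s}. (x (i \<alpha>) - x (i \<beta>)))"
proof -
  have cols: "i (Suc b) \<in> {1..r}" if "b < s" for b
    using assms(4) that by auto
  then have cols': "i (Suc b) - Suc 0 < r" "Suc (i (Suc b) - Suc 0) = i (Suc b)" if "b < s" for b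
    using that by fastforce+
  have "B_mat r s i x = mat s s (\<lambda>(d, b). esym ({1..r} - {i (Suc b)}) d x)"
    by (rule eq_matI) (auto simp: B_mat_def A_mat_def esym_omit_def esym_def cols')
  then have "det (B_mat r s i x) = (\<Prod>a<s. \<Prod>b\<in>{Suc a..<s}. x (i (Suc a)) - x (i (Suc b)))"
    using cols by (simp add: det_esym_remove_mat)
  also have "\<dots> = (\<Prod>\<alpha>\<in>{Suc 0..<Suc s}. \<Prod>\<beta>\<in>{Suc \<alpha>..<Suc s}. x (i \<alpha>) - x (i \<beta>))"
    by (simp only: prod.shift_bounds_Suc_ivl atLeast0LessThan)
  finally show ?thesis
    by (simp add: atLeastLessThanSuc_atLeastAtMost)
qed

end
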